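(* Let $H$ be a complex Hilbert space and $\{\mathcal{U}(t)\}_{t\geq 0}$ a strongly continuous semigroup on $H$ with generator $\mathcal{L}$. Let $z\in D(\mathcal{L}^\dagger)$ with $z\neq0$, $\mathcal{P}:=(\cdot,z)(z,z)^{-1}z$, $\mathcal{Q}:=1-\mathcal{P}$. For $x\in H$ let $f(x,\cdot):\mathbb{R}_+\to\mathbb{C}$ be the unique continuous solution of $$f(x,t)=(\mathcal{U}(t)\mathcal{Q}x,\mathcal{Q}\mathcal{L}^\dagger z)(z,z)^{-1}-\int_0^tf(x,t-s)\,(\mathcal{U}(s)z,\mathcal{Q}\mathcal{L}^\dagger z)(z,z)^{-1}\,ds,$$ and define $u(x,t):=\mathcal{P}x+\mathcal{U}(t)\mathcal{Q}x-\int_0^tf(x,t-s)\,\mathcal{U}(s)z\,ds$. Then $\{\mathcal{G}(t):=u(\cdot,t)\}_{t\geq0}$ is a strongly continuous semigroup of bounded linear operators on $H$.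
   Context: The scalar product $(\cdot,\cdot)$ on $H$ is conjugate-linear in its second argument. The generator is $\mathcal{L}x:=\lim_{h\searrow 0}\frac1h[\mathcal{U}(h)x-x]$ on the set $D(\mathcal{L})$ where the limit exists; $\dagger$ denotes the adjoint. Integrals are Bochner integrals. *)

theory Defs
  imports "HOL-Analysis.Analysis"
begin

text \<open>A complex Hilbert space structure on a real Banach space type 'a:
  sc is the complex scalar multiplication, ip the scalar product
  (linear in the first, conjugate-linear in the second argument),
  inducing the given norm. Completeness comes from the class banach.\<close>
definition complex_hilbert :: "(complex \<Rightarrow> 'a::banach \<Rightarrow> 'a) \<Rightarrow> ('a \<Rightarrow> 'a \<Rightarrow> complex) \<Rightarrow> bool" where
  "complex_hilbert sc ip \<longleftrightarrow>
     (\<forall>x. sc 1 x = x) \<and>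
     (\<forall>a b x. sc (a * b) x = sc a (sc b x)) \<and>
     (\<forall>a b x. sc (a + b) x = sc a x + sc b x) \<and>
     (\<forall>a x y. sc a (x + y) = sc a x + sc a y) \<and>
     (\<forall>r x. sc (complex_of_real r) x = r *\<^sub>R x) \<and>
     (\<forall>x y w. ip (x + y) w = ip x w + ip y w) \<and>
     (\<forall>c x w. ip (sc c x) w = c * ip x w) \<and>
     (\<forall>x y. ip y x = cnj (ip x y)) \<and>
     (\<forall>x. ip x x = complex_of_real ((norm x)\<^sup>2))"

definition bounded_clin :: "(complex \<Rightarrow> 'a::real_normed_vector \<Rightarrow> 'a) \<Rightarrow> ('a \<Rightarrow> 'a) \<Rightarrow> bool" where
  "bounded_clin sc A \<longleftrightarrow> bounded_linear A \<and> (\<forall>c x. A (sc c x) = sc c (A x))"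

definition strongly_cont_semigroup :: "(complex \<Rightarrow> 'a::real_normed_vector \<Rightarrow> 'a) \<Rightarrow> (real \<Rightarrow> 'a \<Rightarrow> 'a) \<Rightarrow> bool" where
  "strongly_cont_semigroup sc T \<longleftrightarrow>
     (\<forall>t\<ge>0. bounded_clin sc (T t)) \<and>
     T 0 = id \<and>
     (\<forall>s t. 0 \<le> s \<longrightarrow> 0 \<le> t \<longrightarrow> T (s + t) = T s \<circ> T t) \<and>
     (\<forall>x. ((\<lambda>t. T t x) \<longlongrightarrow> x) (at_right 0))"

definition gen_dom :: "(real \<Rightarrow> 'a::real_normed_vector \<Rightarrow> 'a) \<Rightarrow> 'a set" where
  "gen_dom T = {x. \<exists>y. ((\<lambda>h. (1 / h) *\<^sub>R (T h x - x)) \<longlongrightarrow> y) (at_right 0)}"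

definition gen :: "(real \<Rightarrow> 'a::real_normed_vector \<Rightarrow> 'a) \<Rightarrow> 'a \<Rightarrow> 'a" where
  "gen T x = Lim (at_right 0) (\<lambda>h. (1 / h) *\<^sub>R (T h x - x))"

definition adj_dom :: "('a \<Rightarrow> 'a \<Rightarrow> complex) \<Rightarrow> 'a set \<Rightarrow> ('a \<Rightarrow> 'a) \<Rightarrow> 'a set" where
  "adj_dom ip D A = {z. \<exists>w. \<forall>x\<in>D. ip (A x) z = ip x w}"

definition adj :: "('a \<Rightarrow> 'a \<Rightarrow> complex) \<Rightarrow> 'a set \<Rightarrow> ('a \<Rightarrow> 'a) \<Rightarrow> 'a \<Rightarrow> 'a" where
  "adj ip D A z = (THE w. \<forall>x\<in>D. ip (A x) z = ip x w)"

end

theory Submission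
  imports Defs
begin

text \<open>
  Write \<open>G t x = P x + w x t\<close> with \<open>w x t = U t (Q x) - \<integral>\<^sub>0\<^sup>t f x (t - s) U s z ds\<close>.
  Uniqueness for the Volterra equation (by Gronwall's inequality) makes \<open>f x t\<close> complex-linear
  in \<open>x\<close> and bounded by a multiple of \<open>\<parallel>x\<parallel>\<close> on compact time intervals, so every \<open>G t\<close> is a
  bounded operator, and strong continuity is inherited from \<open>U\<close>.

  The heart of the matter is that \<open>w x t\<close> stays orthogonal to \<open>z\<close>. Since the domain of the
  generator \<open>L\<close> is dense, \<open>(U t y, z) = (y, z) + \<integral>\<^sub>0\<^sup>t (U s y, L\<^sup>\<dagger> z) ds\<close>; applying this to
  \<open>Q x\<close> and, via associativity of the convolution, to the memory integral, the Volterra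
  equation shows that \<open>g t = (w x t, z)\<close> satisfies \<open>g t = c \<integral>\<^sub>0\<^sup>t g\<close> for a constant \<open>c\<close>,
  so \<open>g = 0\<close>. Hence \<open>P (G s x) = P x\<close> and \<open>Q (G s x) = w x s\<close>; uniqueness then gives
  \<open>f (G s x) \<tau> = f x (\<tau> + s)\<close>, and \<open>G (t + s) = G t \<circ> G s\<close> follows by splitting the memory
  integral of \<open>G (t + s) x\<close> at \<open>t\<close>.
\<close>

section \<open>Complex Hilbert spaces\<close>

locale complex_hilbert_space =
  fixes sc :: "complex \<Rightarrow> 'a::banach \<Rightarrow> 'a" and ip :: "'a \<Rightarrow> 'a \<Rightarrow> complex"
  assumes complex_hilbert: "complex_hilbert sc ip"
begin

lemma sc_mult: "sc (a * b) x = sc a (sc b x)"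
  using complex_hilbert unfolding complex_hilbert_def by meson

lemma sc_add_left: "sc (a + b) x = sc a x + sc b x"
  using complex_hilbert unfolding complex_hilbert_def by meson

lemma sc_add_right: "sc a (x + y) = sc a x + sc a y"
  using complex_hilbert unfolding complex_hilbert_def by meson

lemma sc_of_real: "sc (complex_of_real r) x = r *\<^sub>R x"
  using complex_hilbert unfolding complex_hilbert_def by meson

lemma ip_add_left: "ip (x + y) w = ip x w + ip y w"
  using complex_hilbert unfolding complex_hilbert_def by meson

lemma ip_sc_left: "ip (sc c x) w = c * ip x w"
  using complex_hilbert unfolding complex_hilbert_def by meson

lemma ip_cnj: "ip y x = cnj (ip x y)"
  using complex_hilbert unfolding complex_hilbert_def by meson

lemma ip_self: "ip x x = complex_of_real ((norm x)\<^sup>2)"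
  using complex_hilbert unfolding complex_hilbert_def by meson

lemma ip_add_right: "ip x (y + w) = ip x y + ip x w"
  by (subst (1 2 3) ip_cnj) (simp add: ip_add_left)

lemma ip_sc_right: "ip x (sc c y) = cnj c * ip x y"
  by (subst (1 2) ip_cnj) (simp add: ip_sc_left)

lemma sc_scaleR_left: "sc (r *\<^sub>R a) x = r *\<^sub>R sc a x"
  by (simp only: scaleR_conv_of_real sc_mult sc_of_real)

lemma sc_scaleR_right: "sc a (r *\<^sub>R x) = r *\<^sub>R sc a x"
  by (metis mult.commute sc_mult sc_of_real)

lemma sc_zero_left [simp]: "sc 0 x = 0"
  using sc_of_real[of 0 x] by simp

lemma sc_diff_right: "sc a (x - y) = sc a x - sc a y"
  by (metis add_diff_cancel eq_diff_eq sc_add_right)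

lemma ip_scaleR_left: "ip (r *\<^sub>R x) y = r *\<^sub>R ip x y"
  by (metis ip_sc_left sc_of_real scaleR_conv_of_real)

lemma ip_scaleR_right: "ip y (r *\<^sub>R x) = r *\<^sub>R ip y x"
  by (metis complex_cnj_complex_of_real ip_sc_right sc_of_real scaleR_conv_of_real)

lemma ip_diff_left: "ip (x - y) w = ip x w - ip y w"
  by (metis add_diff_cancel eq_diff_eq ip_add_left)

lemma ip_diff_right: "ip w (x - y) = ip w x - ip w y"
  by (metis add_diff_cancel eq_diff_eq ip_add_right)

lemma norm_sc: "norm (sc a x) = norm a * norm x"
proof -
  have "complex_of_real ((norm (sc a x))\<^sup>2) = a * cnj a * ip x x"
    unfolding ip_self[symmetric] by (simp add: ip_sc_left ip_sc_right)
  also have "\<dots> = complex_of_real ((norm a * norm x)\<^sup>2)"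
    by (simp only: ip_self complex_norm_square of_real_mult power_mult_distrib mult_ac)
  finally show ?thesis
    by (simp add: power2_eq_iff_nonneg del: of_real_power)
qed

lemma bounded_bilinear_sc: "bounded_bilinear sc"
  by (rule bounded_bilinear.intro)
     (auto simp: sc_add_left sc_add_right sc_scaleR_left sc_scaleR_right norm_sc intro: exI[of _ 1])

text \<open>Expand \<open>0 \<le> (x - c y, x - c y)\<close> for \<open>c = (x, y) / (y, y)\<close>.\<close>
lemma norm_ip_le: "norm (ip x y) \<le> norm x * norm y"
proof (cases "y = 0")
  case True
  then show ?thesis using ip_scaleR_right[of x 0 0] by simp
next
  case False
  define c where "c = ip x y / ip y y"
  have "complex_of_real ((norm (x - sc c y))\<^sup>2) =
      ip x x - cnj c * ip x y - c * ip y x + c * cnj c * ip y y"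
    unfolding ip_self[symmetric] by (simp add: ip_diff_left ip_diff_right ip_sc_left ip_sc_right algebra_simps)
  also have "\<dots> = complex_of_real ((norm x)\<^sup>2 - (norm (ip x y))\<^sup>2 / (norm y)\<^sup>2)"
    using False by (simp add: c_def ip_cnj[of x y] ip_self complex_norm_square[symmetric] field_simps)
  finally have "(norm (ip x y))\<^sup>2 / (norm y)\<^sup>2 \<le> (norm x)\<^sup>2"
    by (smt (verit) of_real_eq_iff zero_le_power2)
  then have "(norm (ip x y))\<^sup>2 \<le> (norm x * norm y)\<^sup>2"
    using False by (simp add: field_simps power_mult_distrib)
  then show ?thesis
    by (rule power2_le_imp_le) simp
qed

lemma bounded_bilinear_ip: "bounded_bilinear ip"
  by (rule bounded_bilinear.intro)
     (auto simp: ip_add_left ip_add_right ip_scaleR_left ip_scaleR_right norm_ip_le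
        intro: exI[of _ 1])

lemma ip_self_eq_0_iff: "ip x x = 0 \<longleftrightarrow> x = 0"
  by (simp add: ip_self)

end

section \<open>Convolution and Volterra equations\<close>

lemma integral_reflect_Icc_0:
  fixes h :: "real \<Rightarrow> 'a::banach"
  shows "integral {0..t} (\<lambda>s. h (t - s)) = integral {0..t} h"
proof -
  have "integral {0..t} (\<lambda>s. h (t - s)) = integral {0 - t..t - t} (\<lambda>s. h (s + t))"
    using Henstock_Kurzweil_Integration.integral_reflect_real[of t 0 "\<lambda>s. h (t - s)"]
    by (simp add: add.commute)
  also have "\<dots> = integral {0..t} h"
    by (rule integral_shift_real_ivl)
  finally show ?thesis .
qed

lemma integral_combine_shift:
  fixes h :: "real \<Rightarrow> 'a::banach"
  assumes "h integrable_on {0..t + s}" "0 \<le> t" "0 \<le> s"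
  shows "integral {0..t + s} h = integral {0..t} h + integral {0..s} (\<lambda>\<sigma>. h (t + \<sigma>))"
proof -
  have "integral {t - t..t + s - t} (\<lambda>\<sigma>. h (\<sigma> + t)) = integral {t..t + s} h"
    by (rule integral_shift_real_ivl)
  then show ?thesis
    using Henstock_Kurzweil_Integration.integral_combine[of 0 t "t + s" h] assms by (simp add: add.commute)
qed

lemma continuous_on_reflect:
  fixes \<phi> :: "real \<Rightarrow> 'a::real_normed_vector"
  assumes "continuous_on {0..T} \<phi>" "t \<le> T"
  shows "continuous_on {0..t} (\<lambda>s. \<phi> (t - s))"
  by (rule continuous_on_compose2[OF assms(1)]) (use assms(2) in \<open>auto intro!: continuous_intros\<close>)

definition conv :: "(real \<Rightarrow> 'a::{real_normed_field,banach}) \<Rightarrow> (real \<Rightarrow> 'a) \<Rightarrow> real \<Rightarrow> 'a" where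
  "conv \<phi> \<psi> t = integral {0..t} (\<lambda>s. \<phi> (t - s) * \<psi> s)"

lemma conv_commute: "conv \<phi> \<psi> t = conv \<psi> \<phi> t"
  unfolding conv_def
  using integral_reflect_Icc_0[of t "\<lambda>s. \<phi> (t - s) * \<psi> s"] by (simp add: mult.commute)

lemma integrable_conv:
  fixes \<phi> \<psi> :: "real \<Rightarrow> 'a::{real_normed_field,banach}"
  assumes "continuous_on {0..T} \<phi>" "continuous_on {0..T} \<psi>" "t \<in> {0..T}"
  shows "(\<lambda>s. \<phi> (t - s) * \<psi> s) integrable_on {0..t}"
proof -
  have "continuous_on {0..t} \<psi>"
    using continuous_on_subset[OF assms(2)] assms(3) by auto
  then show ?thesis
    by (intro integrable_continuous_real continuous_intros continuous_on_reflect[OF assms(1)])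
      (use assms(3) in simp)
qed

lemma conv_add_right:
  assumes "continuous_on {0..T} \<phi>" "continuous_on {0..T} \<psi>" "continuous_on {0..T} \<theta>"
    and "t \<in> {0..T}"
  shows "conv \<phi> (\<lambda>s. \<psi> s + \<theta> s) t = conv \<phi> \<psi> t + conv \<phi> \<theta> t"
  unfolding conv_def distrib_left
  by (intro integral_add integrable_conv[OF assms(1,2,4)] integrable_conv[OF assms(1,3,4)])

lemma integral_extend_vanishing_kernel:
  fixes \<phi> g :: "real \<Rightarrow> 'a::{real_normed_field,banach}"
  assumes \<phi>: "continuous_on {0..T} \<phi>" and g: "continuous_on {-T..T} g"
    and g0: "\<And>v. v \<le> 0 \<Longrightarrow> g v = 0" and t: "t \<in> {0..T}"
  shows "integral {0..t} (\<lambda>s. \<phi> s * g (t - s)) = integral {0..T} (\<lambda>s. \<phi> s * g (t - s))"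
proof -
  have "integral {t..T} (\<lambda>s. \<phi> s * g (t - s)) = integral {t..T} (\<lambda>_. 0)"
    by (rule integral_cong) (auto simp: g0)
  moreover have "(\<lambda>s. \<phi> s * g (t - s)) integrable_on {0..T}"
    by (intro integrable_continuous_real continuous_intros \<phi> continuous_on_compose2[OF g])
       (use t in auto)
  ultimately show ?thesis
    using Henstock_Kurzweil_Integration.integral_combine[of 0 t T "\<lambda>s. \<phi> s * g (t - s)"] t
    by simp
qed

lemma integral_shift_vanishing:
  fixes e :: "real \<Rightarrow> 'a::banach"
  assumes e: "continuous_on {-t..t} e" and e0: "\<And>v. v \<le> 0 \<Longrightarrow> e v = 0" and s: "s \<in> {0..t}"
  shows "integral {0..t} (\<lambda>u. e (u - s)) = integral {0..t - s} e"
proof -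
  have "integral {0..s + (t - s)} (\<lambda>u. e (u - s))
      = integral {0..s} (\<lambda>u. e (u - s)) + integral {0..t - s} (\<lambda>\<sigma>. e (s + \<sigma> - s))"
    using s by (intro integral_combine_shift integrable_continuous_real
        continuous_on_compose2[OF e] continuous_intros) auto
  moreover have "integral {0..s} (\<lambda>u. e (u - s)) = 0"
    using integral_cong[of "{0..s}" "\<lambda>u. e (u - s)" "\<lambda>_. 0"] e0 by simp
  ultimately show ?thesis
    by simp
qed

lemma continuous_on_integral_vanishing_kernel:
  fixes \<phi> g :: "real \<Rightarrow> 'a::{real_normed_field,banach}"
  assumes \<phi>: "continuous_on {0..T} \<phi>" and g: "continuous_on UNIV g"
    and g0: "\<And>v. v \<le> 0 \<Longrightarrow> g v = 0"
  shows "continuous_on {0..T} (\<lambda>t. integral {0..t} (\<lambda>s. \<phi> s * g (t - s)))"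
proof -
  have "continuous_on {0..T} (\<lambda>t. integral (cbox 0 T) (\<lambda>s. \<phi> s * g (t - s)))"
    by (rule integral_continuous_on_param)
       (auto simp: split_beta intro!: continuous_intros continuous_on_compose2[OF \<phi>]
          continuous_on_compose2[OF g])
  then show ?thesis
    by (rule continuous_on_eq)
       (auto intro!: integral_extend_vanishing_kernel[symmetric] \<phi> continuous_on_subset[OF g] g0)
qed

lemma continuous_on_conv:
  assumes \<phi>: "continuous_on {0..T} \<phi>" and \<psi>: "continuous_on {0..T} \<psi>"
  shows "continuous_on {0..T} (conv \<phi> \<psi>)"
proof (cases "0 \<le> T")
  case False
  then show ?thesis by simp
next
  case True
  define g where "g v = \<psi> (max 0 (min v T)) - \<psi> 0" for v
  have g: "continuous_on UNIV g"
    unfolding g_def by (intro continuous_intros continuous_on_compose2[OF \<psi>]) (use True in auto)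
  have eq: "conv \<phi> \<psi> t = \<psi> 0 * integral {0..t} \<phi> + integral {0..t} (\<lambda>s. \<phi> s * g (t - s))"
    if t: "t \<in> {0..T}" for t
  proof -
    have "conv \<phi> \<psi> t = integral {0..t} (\<lambda>s. \<psi> (t - s) * \<phi> s)"
      by (subst conv_commute) (simp add: conv_def)
    also have "\<dots> = integral {0..t} (\<lambda>s. \<psi> 0 * \<phi> s + \<phi> s * g (t - s))"
    proof (rule integral_cong)
      fix s assume "s \<in> {0..t}"
      then have clamp: "max 0 (min (t - s) T) = t - s" using t by auto
      show "\<psi> (t - s) * \<phi> s = \<psi> 0 * \<phi> s + \<phi> s * g (t - s)"
        unfolding g_def clamp by (simp add: algebra_simps)
    qed
    also have "\<dots> = \<psi> 0 * integral {0..t} \<phi> + integral {0..t} (\<lambda>s. \<phi> s * g (t - s))"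
      using t continuous_on_subset[OF \<phi>, of "{0..t}"]
      by (subst integral_add)
         (auto intro!: integrable_continuous_real continuous_intros continuous_on_compose2[OF g])
    finally show ?thesis .
  qed
  have "continuous_on {0..T} (\<lambda>t. \<psi> 0 * integral {0..t} \<phi> + integral {0..t} (\<lambda>s. \<phi> s * g (t - s)))"
    using True
    by (intro continuous_intros indefinite_integral_continuous_1 integrable_continuous_real \<phi>
        continuous_on_integral_vanishing_kernel g) (auto simp: g_def)
  then show ?thesis
    by (rule continuous_on_eq) (simp add: eq)
qed

lemma conv_diff_left:
  assumes "continuous_on {0..T} \<phi>" "continuous_on {0..T} \<psi>" "continuous_on {0..T} k"
    and "t \<in> {0..T}"
  shows "conv (\<lambda>s. \<phi> s - \<psi> s) k t = conv \<phi> k t - conv \<psi> k t"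
  unfolding conv_def left_diff_distrib
  by (intro integral_diff integrable_conv[OF assms(1,3,4)] integrable_conv[OF assms(2,3,4)])

lemma conv_add_left:
  assumes "continuous_on {0..T} \<phi>" "continuous_on {0..T} \<psi>" "continuous_on {0..T} k"
    and "t \<in> {0..T}"
  shows "conv (\<lambda>s. \<phi> s + \<psi> s) k t = conv \<phi> k t + conv \<psi> k t"
  unfolding conv_def distrib_right
  by (intro integral_add integrable_conv[OF assms(1,3,4)] integrable_conv[OF assms(2,3,4)])

lemma conv_cmult_left: "conv (\<lambda>s. c * \<phi> s) k t = c * conv \<phi> k t"
  by (simp add: conv_def mult.assoc)

lemma conv_cmult_right: "conv \<phi> (\<lambda>s. c * \<psi> s) t = c * conv \<phi> \<psi> t"
  by (simp add: conv_def mult.left_commute)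

lemma conv_const_right: "conv \<phi> (\<lambda>_. c) t = c * integral {0..t} \<phi>"
  using integral_reflect_Icc_0[of t \<phi>] by (simp add: conv_def mult.commute)

lemma conv_const_add_right:
  assumes "continuous_on {0..T} \<phi>" "continuous_on {0..T} \<psi>" "t \<in> {0..T}"
  shows "conv \<phi> (\<lambda>s. c + \<psi> s) t = c * integral {0..t} \<phi> + conv \<phi> \<psi> t"
  using conv_add_right[OF assms(1) _ assms(2,3), of "\<lambda>_. c"] by (simp add: conv_const_right)

text \<open>Cauchy's formula for the repeated integral, by parts against \<open>s \<mapsto> t - s\<close>.\<close>
lemma cauchy_repeated_integral:
  fixes \<phi> :: "real \<Rightarrow> 'a::banach"
  assumes \<phi>: "continuous_on {0..T} \<phi>" and t: "t \<in> {0..T}"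
  shows "integral {0..t} (\<lambda>u. integral {0..u} \<phi>) = integral {0..t} (\<lambda>s. (t - s) *\<^sub>R \<phi> s)"
proof -
  have \<phi>t: "continuous_on {0..t} \<phi>"
    using continuous_on_subset[OF \<phi>] t by auto
  have "((\<lambda>s. (-1) *\<^sub>R integral {0..s} \<phi>) has_integral - integral {0..t} (\<lambda>s. (t - s) *\<^sub>R \<phi> s)) {0..t}"
  proof (rule integration_by_parts_interior[OF bounded_bilinear_scaleR])
    show "continuous_on {0..t} (\<lambda>s. integral {0..s} \<phi>)"
      by (intro indefinite_integral_continuous_1 integrable_continuous_real \<phi>t)
    show "((\<lambda>s. integral {0..s} \<phi>) has_vector_derivative \<phi> x) (at x)" if "x \<in> {0<..<t}" for x
      using integral_has_vector_derivative[OF \<phi>t, of x] that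
        at_within_interior[of x "{0..t}"] by auto
    show "((\<lambda>s. t - s) has_vector_derivative -1) (at x)" for x
      by (auto intro!: derivative_eq_intros simp: has_real_derivative_iff_has_vector_derivative[symmetric])
    show "((\<lambda>s. (t - s) *\<^sub>R \<phi> s) has_integral
        (t - t) *\<^sub>R integral {0..t} \<phi> - (t - 0) *\<^sub>R integral {0..0} \<phi>
          - - integral {0..t} (\<lambda>s. (t - s) *\<^sub>R \<phi> s)) {0..t}"
      by (simp add: has_integral_integral[symmetric])
         (intro integrable_continuous_real continuous_intros \<phi>t)
  qed (use t in \<open>auto intro!: continuous_intros\<close>)
  then show ?thesis
    by (simp add: has_integral_iff)
qed

lemma conv_of_real:
  assumes "continuous_on {0..T} \<phi>" "t \<in> {0..T}"
  shows "conv \<phi> of_real t = integral {0..t} (\<lambda>u. integral {0..u} \<phi>)"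
  using cauchy_repeated_integral[OF assms] integral_reflect_Icc_0[of t "\<lambda>s. \<phi> s * of_real (t - s)"]
  by (simp add: conv_def scaleR_conv_of_real mult.commute)

text \<open>Extended by \<open>0\<close> to negative arguments, \<open>k\<close> stays continuous, so both sides are iterated
  integrals of \<open>\<phi> s * k (u - s)\<close> over the square \<open>[0, t]\<^sup>2\<close>, which Fubini's theorem equates.\<close>
lemma conv_integral_assoc_vanishing:
  assumes \<phi>: "continuous_on {0..T} \<phi>" and k: "continuous_on {0..T} k" and k0: "k 0 = 0"
    and t: "t \<in> {0..T}"
  shows "conv \<phi> (\<lambda>s. integral {0..s} k) t = integral {0..t} (conv \<phi> k)"
proof -
  from t have "0 \<le> t" "t \<le> T" by auto
  define e where "e v = k (max 0 (min v T))" for v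
  have e: "continuous_on UNIV e"
    unfolding e_def by (intro continuous_intros continuous_on_compose2[OF k]) (use t in auto)
  have e_nonpos: "e v = 0" if "v \<le> 0" for v
    using that t k0 by (simp add: e_def)
  have e_eq: "e v = k v" if "v \<in> {0..T}" for v
    using that by (simp add: e_def)
  have inner_u: "integral {0..t} (\<lambda>u. e (u - s)) = integral {0..t - s} k" if s: "s \<in> {0..t}" for s
  proof -
    have "integral {0..t} (\<lambda>u. e (u - s)) = integral {0..t - s} e"
      using s e_nonpos by (intro integral_shift_vanishing continuous_on_subset[OF e]) auto
    also have "\<dots> = integral {0..t - s} k"
      by (rule integral_cong) (use s \<open>t \<le> T\<close> in \<open>simp add: e_eq\<close>)
    finally show ?thesis .
  qed
  have inner_s: "integral {0..t} (\<lambda>s. \<phi> s * e (u - s)) = conv \<phi> k u" if u: "u \<in> {0..t}" for u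
  proof -
    have "conv \<phi> k u = integral {0..u} (\<lambda>s. \<phi> s * e (u - s))"
      by (subst conv_commute, unfold conv_def, rule integral_cong)
         (use u \<open>t \<le> T\<close> in \<open>simp add: e_eq mult.commute\<close>)
    also have "\<dots> = integral {0..t} (\<lambda>s. \<phi> s * e (u - s))"
      using u t continuous_on_subset[OF \<phi>, of "{0..t}"]
      by (intro integral_extend_vanishing_kernel continuous_on_subset[OF e] e_nonpos) auto
    finally show ?thesis by simp
  qed
  have "conv \<phi> (\<lambda>s. integral {0..s} k) t = integral {0..t} (\<lambda>s. \<phi> s * integral {0..t - s} k)"
    by (subst conv_commute) (simp add: conv_def mult.commute)
  also have "\<dots> = integral {0..t} (\<lambda>s. integral {0..t} (\<lambda>u. \<phi> s * e (u - s)))"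
    by (rule integral_cong) (simp add: inner_u)
  also have "\<dots> = integral {0..t} (\<lambda>u. integral {0..t} (\<lambda>s. \<phi> s * e (u - s)))"
  proof -
    have "continuous_on (cbox (0, 0) (t, t)) (\<lambda>(s, u). \<phi> s * e (u - s))"
      unfolding cbox_Pair_eq using \<open>t \<le> T\<close>
      by (auto simp: split_beta intro!: continuous_intros continuous_on_compose2[OF \<phi>]
          continuous_on_compose2[OF e])
    from integral_swap_continuous[OF this] show ?thesis by simp
  qed
  also have "\<dots> = integral {0..t} (conv \<phi> k)"
    by (rule integral_cong) (simp add: inner_s)
  finally show ?thesis .
qed

text \<open>Splitting \<open>k = k 0 + (k - k 0)\<close> reduces to the vanishing case and to Cauchy's formula.\<close>
lemma conv_integral_assoc:
  assumes \<phi>: "continuous_on {0..T} \<phi>" and k: "continuous_on {0..T} k" and t: "t \<in> {0..T}"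
  shows "conv \<phi> (\<lambda>s. integral {0..s} k) t = integral {0..t} (conv \<phi> k)"
proof -
  define k0 where "k0 s = k s - k 0" for s
  have k0: "continuous_on {0..T} k0"
    unfolding k0_def by (intro continuous_intros k)
  have int_k0: "continuous_on {0..T} (\<lambda>s. integral {0..s} k0)"
    by (intro indefinite_integral_continuous_1 integrable_continuous_real k0)
  have int_k: "integral {0..s} k = k 0 * of_real s + integral {0..s} k0" if "s \<in> {0..T}" for s
  proof -
    have "k integrable_on {0..s}"
      using that continuous_on_subset[OF k, of "{0..s}"] by (auto intro: integrable_continuous_real)
    then show ?thesis
      using that unfolding k0_def by (subst integral_diff) (auto simp: scaleR_conv_of_real mult.commute)
  qed
  have "conv \<phi> (\<lambda>s. integral {0..s} k) t = conv \<phi> (\<lambda>s. k 0 * of_real s + integral {0..s} k0) t"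
    unfolding conv_def using t by (intro integral_cong) (simp add: int_k)
  also have "\<dots> = k 0 * conv \<phi> of_real t + conv \<phi> (\<lambda>s. integral {0..s} k0) t"
    using int_k0 by (simp add: conv_add_right[OF \<phi> _ _ t] conv_cmult_right continuous_intros)
  also have "\<dots> = k 0 * integral {0..t} (\<lambda>u. integral {0..u} \<phi>) + integral {0..t} (conv \<phi> k0)"
    using conv_integral_assoc_vanishing[OF \<phi> k0 _ t] by (simp add: conv_of_real[OF \<phi> t] k0_def)
  also have "\<dots> = integral {0..t} (\<lambda>u. k 0 * integral {0..u} \<phi> + conv \<phi> k0 u)"
  proof -
    have "continuous_on {0..t} (\<lambda>u. integral {0..u} \<phi>)" "continuous_on {0..t} (conv \<phi> k0)"
      using t continuous_on_subset[OF \<phi>, of "{0..t}"] continuous_on_subset[OF continuous_on_conv[OF \<phi> k0]]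
      by (auto intro: indefinite_integral_continuous_1 integrable_continuous_real)
    then show ?thesis
      by (subst integral_add) (auto intro!: integrable_continuous_real continuous_intros)
  qed
  also have "\<dots> = integral {0..t} (conv \<phi> k)"
    using t by (intro integral_cong) (simp add: k0_def conv_const_add_right[OF \<phi> k0, symmetric])
  finally show ?thesis .
qed

lemma gronwall:
  fixes \<phi> :: "real \<Rightarrow> real"
  assumes cont: "continuous_on {0..T} \<phi>" and K: "K \<ge> 0"
    and le: "\<And>t. t \<in> {0..T} \<Longrightarrow> \<phi> t \<le> A + K * integral {0..t} \<phi>"
    and t: "t \<in> {0..T}"
  shows "\<phi> t \<le> A * exp (K * t)"
proof -
  define \<Psi> where "\<Psi> t = A + K * integral {0..t} \<phi>" for t
  define \<Lambda> where "\<Lambda> t = exp (- K * t) * \<Psi> t" for t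
  have "continuous_on {0..T} (\<lambda>t. integral {0..t} \<phi>)"
    by (rule indefinite_integral_continuous_1[OF integrable_continuous_real[OF cont]])
  then have "continuous_on {0..t} \<Lambda>"
    unfolding \<Lambda>_def \<Psi>_def using t
    by (intro continuous_intros) (auto elim: continuous_on_subset)
  then have "\<Lambda> t \<le> \<Lambda> 0"
  proof (rule DERIV_nonpos_imp_decreasing_open[rotated 2])
    fix x assume x: "0 < x" "x < t"
    then have "at x within {0..T} = at x"
      using t by (intro at_within_interior) auto
    then have "((\<lambda>u. integral {0..u} \<phi>) has_real_derivative \<phi> x) (at x)"
      using integral_has_real_derivative[OF cont, of x] x t by simp
    then have "(\<Lambda> has_real_derivative exp (- K * x) * (K * \<phi> x - K * \<Psi> x)) (at x)"
      unfolding \<Lambda>_def \<Psi>_def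
      by (auto intro!: derivative_eq_intros simp: algebra_simps)
    moreover have "K * \<phi> x \<le> K * \<Psi> x"
      using le[of x] x t K by (simp add: \<Psi>_def mult_left_mono)
    ultimately show "\<exists>y. (\<Lambda> has_real_derivative y) (at x) \<and> y \<le> 0"
      by (intro exI conjI) (auto simp: mult_nonneg_nonpos)
  qed (use t in auto)
  then have "\<Psi> t \<le> A * exp (K * t)"
    by (simp add: \<Lambda>_def \<Psi>_def exp_minus field_simps)
  then show ?thesis
    using le[OF t] by (simp add: \<Psi>_def)
qed

lemma volterra_bound:
  assumes \<phi>: "continuous_on {0..T} \<phi>" and k: "continuous_on {0..T} k"
    and eq: "\<And>t. t \<in> {0..T} \<Longrightarrow> \<phi> t = a t - conv \<phi> k t"
    and A: "\<And>t. t \<in> {0..T} \<Longrightarrow> norm (a t) \<le> A"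
    and B: "\<And>s. s \<in> {0..T} \<Longrightarrow> norm (k s) \<le> B"
    and t: "t \<in> {0..T}"
  shows "norm (\<phi> t) \<le> A * exp (B * t)"
proof (rule gronwall[OF _ _ _ t])
  show "continuous_on {0..T} (\<lambda>t. norm (\<phi> t))"
    by (intro continuous_intros \<phi>)
  show "B \<ge> 0"
    using B[of 0] t by (auto intro: order_trans[OF norm_ge_zero])
  fix t assume t: "t \<in> {0..T}"
  have "norm (conv \<phi> k t) \<le> integral {0..t} (\<lambda>s. norm (\<phi> (t - s)) * B)"
    unfolding conv_def
  proof (rule integral_norm_bound_integral[OF integrable_conv[OF \<phi> k t]])
    show "(\<lambda>s. norm (\<phi> (t - s)) * B) integrable_on {0..t}"
      by (intro integrable_continuous_real continuous_intros continuous_on_reflect[OF \<phi>])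
         (use t in simp)
    show "norm (\<phi> (t - s) * k s) \<le> norm (\<phi> (t - s)) * B" if "s \<in> {0..t}" for s
      using B[of s] that t by (auto simp: norm_mult intro: mult_left_mono)
  qed
  also have "\<dots> = B * integral {0..t} (\<lambda>s. norm (\<phi> s))"
    using integral_reflect_Icc_0[of t "\<lambda>s. norm (\<phi> s)"] by (simp add: mult.commute)
  finally show "norm (\<phi> t) \<le> A + B * integral {0..t} (\<lambda>t. norm (\<phi> t))"
    using eq[OF t] A[OF t] norm_triangle_ineq4[of "a t" "conv \<phi> k t"] by simp
qed

lemma volterra_unique:
  assumes \<phi>: "continuous_on {0..T} \<phi>" and \<psi>: "continuous_on {0..T} \<psi>"
    and k: "continuous_on {0..T} k"
    and eq_\<phi>: "\<And>t. t \<in> {0..T} \<Longrightarrow> \<phi> t = a t - conv \<phi> k t"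
    and eq_\<psi>: "\<And>t. t \<in> {0..T} \<Longrightarrow> \<psi> t = a t - conv \<psi> k t"
    and t: "t \<in> {0..T}"
  shows "\<phi> t = \<psi> t"
proof -
  obtain B where B: "\<And>s. s \<in> {0..T} \<Longrightarrow> norm (k s) \<le> B"
    using continuous_on_compact_bound[OF compact_Icc k] by blast
  have "norm (\<phi> t - \<psi> t) \<le> 0 * exp (B * t)"
  proof (rule volterra_bound[OF _ k _ _ B t])
    show "continuous_on {0..T} (\<lambda>s. \<phi> s - \<psi> s)"
      by (intro continuous_intros \<phi> \<psi>)
    show "\<phi> s - \<psi> s = 0 - conv (\<lambda>s. \<phi> s - \<psi> s) k s" if "s \<in> {0..T}" for s
      using eq_\<phi>[OF that] eq_\<psi>[OF that] conv_diff_left[OF \<phi> \<psi> k that] by simp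
  qed simp
  then show ?thesis by simp
qed

section \<open>Strongly continuous semigroups\<close>

lemma integral_average_tendsto:
  fixes f :: "real \<Rightarrow> 'a::banach"
  assumes f: "continuous_on {a..b} f" and ab: "a < b"
  shows "((\<lambda>h. (1 / h) *\<^sub>R integral {a..a + h} f) \<longlongrightarrow> f a) (at_right 0)"
proof -
  have "((\<lambda>u. integral {a..u} f) has_vector_derivative f a) (at_right a)"
    using integral_has_vector_derivative[OF f, of a] ab by (simp add: at_within_Icc_at_right)
  then have "((\<lambda>u. (1 / norm (u - a)) *\<^sub>R (integral {a..u} f - (u - a) *\<^sub>R f a)) \<longlongrightarrow> 0) (at_right a)"
    by (simp add: has_vector_derivative_def has_derivative_within)
  then have "((\<lambda>h. (1 / norm h) *\<^sub>R (integral {a..h + a} f - h *\<^sub>R f a)) \<longlongrightarrow> 0) (at_right 0)"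
    by (simp add: filterlim_at_right_to_0[of _ _ a])
  then have "((\<lambda>h. (1 / h) *\<^sub>R integral {a..a + h} f - f a) \<longlongrightarrow> 0) (at_right 0)"
  proof (rule Lim_transform_eventually)
    show "\<forall>\<^sub>F h in at_right 0. (1 / norm h) *\<^sub>R (integral {a..h + a} f - h *\<^sub>R f a)
        = (1 / h) *\<^sub>R integral {a..a + h} f - f a"
      by (auto simp: eventually_at_right_field add.commute scaleR_diff_right intro: exI[of _ 1])
  qed
  then show ?thesis
    by (simp add: LIM_zero_iff)
qed

lemma closed_cover_interior:
  fixes E :: "nat \<Rightarrow> 'a::banach set"
  assumes closed: "\<And>m. closed (E m)" and cover: "(\<Union>m. E m) = UNIV"
  obtains m where "interior (E m) \<noteq> {}"
proof -
  have "euclidean interior_of (\<Union>m. E m) = {}" if "\<And>m. interior (E m) = {}"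
  proof (rule Baire_category_alt)
    show "completely_metrizable_space (euclidean :: 'a topology) \<or>
        locally_compact_space (euclidean :: 'a topology) \<and> regular_space (euclidean :: 'a topology)"
      using completely_metrizable_space_euclidean by blast
    show "closedin euclidean S \<and> euclidean interior_of S = {}" if "S \<in> range E" for S
      using that closed \<open>\<And>m. interior (E m) = {}\<close>
      by (auto simp: euclidean_interior_of closed_closedin[symmetric])
  qed simp
  with that show ?thesis
    unfolding cover euclidean_interior_of by auto
qed

lemma norm_le_of_bounded_on_ball:
  assumes lin: "bounded_linear L" and \<epsilon>: "\<epsilon> > 0"
    and bound: "\<And>x. x \<in> ball x0 \<epsilon> \<Longrightarrow> norm (L x) \<le> m"
  shows "norm (L y) \<le> (4 * m / \<epsilon>) * norm y"
proof (cases "y = 0")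
  case True
  then show ?thesis using lin by (simp add: linear_simps)
next
  case False
  define y' where "y' = (\<epsilon> / (2 * norm y)) *\<^sub>R y"
  have "norm y' = \<epsilon> / 2" using False \<epsilon> by (simp add: y'_def)
  then have "norm (L (x0 + y')) \<le> m" "norm (L x0) \<le> m"
    using \<epsilon> by (auto intro!: bound simp: dist_norm)
  then have "norm (L y') \<le> 2 * m"
    using norm_triangle_ineq4[of "L (x0 + y')" "L x0"] lin by (simp add: linear_simps)
  then have "(\<epsilon> / (2 * norm y)) * norm (L y) \<le> 2 * m"
    using lin \<epsilon> by (simp add: y'_def linear_simps)
  then show ?thesis using \<epsilon> False by (simp add: field_simps)
qed

lemma uniform_boundedness:
  fixes T :: "'i \<Rightarrow> 'a::banach \<Rightarrow> 'b::real_normed_vector"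
  assumes lin: "\<And>i. bounded_linear (T i)"
    and pointwise: "\<And>x. \<exists>B. \<forall>i. norm (T i x) \<le> B"
  obtains M where "\<And>i x. norm (T i x) \<le> M * norm x"
proof -
  define E where "E m = {x. \<forall>i. norm (T i x) \<le> real m}" for m :: nat
  have closed: "closed (E m)" for m
  proof -
    have "E m = (\<Inter>i. (\<lambda>x. norm (T i x)) -` {..real m})"
      by (auto simp: E_def)
    moreover have "continuous_on UNIV (\<lambda>x. norm (T i x))" for i
      by (intro continuous_intros linear_continuous_on lin)
    ultimately show ?thesis
      by (auto intro!: closed_INT closed_vimage)
  qed
  have "(\<Union>m. E m) = UNIV"
  proof -
    have "\<exists>m. x \<in> E m" for x
    proof -
      obtain B where "\<forall>i. norm (T i x) \<le> B" using pointwise by blast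
      moreover obtain m :: nat where "B \<le> real m" using real_arch_simple by blast
      ultimately show ?thesis by (auto simp: E_def intro: order_trans)
    qed
    then show ?thesis by blast
  qed
  then obtain m where "interior (E m) \<noteq> {}"
    using closed_cover_interior closed by blast
  then obtain x0 \<epsilon> where \<epsilon>: "\<epsilon> > 0" "ball x0 \<epsilon> \<subseteq> E m"
    by (auto simp: mem_interior)
  have "norm (T i y) \<le> (4 * real m / \<epsilon>) * norm y" for i y
    using \<epsilon> by (intro norm_le_of_bounded_on_ball[OF lin]) (auto simp: E_def)
  then show ?thesis by (rule that)
qed

locale c0_semigroup =
  fixes U :: "real \<Rightarrow> 'a::banach \<Rightarrow> 'a"
  assumes bounded_linear_U: "t \<ge> 0 \<Longrightarrow> bounded_linear (U t)"
    and U_0: "U 0 x = x"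
    and U_plus: "s \<ge> 0 \<Longrightarrow> t \<ge> 0 \<Longrightarrow> U (s + t) x = U s (U t x)"
    and tendsto_U_0: "((\<lambda>t. U t x) \<longlongrightarrow> x) (at_right 0)"
begin

lemma U_add: "t \<ge> 0 \<Longrightarrow> U t (x + y) = U t x + U t y"
  by (rule linear_add[OF bounded_linear.linear[OF bounded_linear_U]])

lemma U_diff: "t \<ge> 0 \<Longrightarrow> U t (x - y) = U t x - U t y"
  by (rule linear_diff[OF bounded_linear.linear[OF bounded_linear_U]])

lemma continuous_orbit_at_0: "continuous (at 0 within {0..}) (\<lambda>t. U t x)"
  using tendsto_U_0 by (simp add: continuous_within at_within_Ici_at_right U_0)

text \<open>Otherwise some \<open>U t\<^sub>n\<close> with \<open>t\<^sub>n \<rightarrow> 0\<close> would have norm at least \<open>n\<close>, although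
  every sequence \<open>U t\<^sub>n x \<rightarrow> x\<close> is bounded: this contradicts uniform boundedness.\<close>
lemma locally_bounded: obtains \<delta> M where "\<delta> > 0" "\<And>t x. t \<in> {0..\<delta>} \<Longrightarrow> norm (U t x) \<le> M * norm x"
proof (rule ccontr)
  assume "\<not> thesis"
  with that have "\<forall>n::nat. \<exists>t x. t \<in> {0..inverse (Suc n)} \<and> norm (U t x) > n * norm x"
    by (meson not_le of_nat_0_less_iff inverse_positive_iff_positive zero_less_Suc)
  then obtain tt :: "nat \<Rightarrow> real" and xx :: "nat \<Rightarrow> 'a" where tt: "\<And>n. tt n \<in> {0..inverse (Suc n)}"
    and xx: "\<And>n. norm (U (tt n) (xx n)) > n * norm (xx n)"
    by metis
  have "tt \<longlonglongrightarrow> 0"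
    using tt by (intro tendsto_sandwich[OF _ _ tendsto_const LIMSEQ_inverse_real_of_nat]) auto
  then have "(\<lambda>n. U (tt n) x) \<longlonglongrightarrow> x" for x
    using continuous_within_tendsto_compose'[OF continuous_orbit_at_0, of tt] tt
    by (auto simp: U_0)
  then have "\<exists>B. \<forall>n. norm (U (tt n) x) \<le> B" for x
    by (metis convergentI convergent_imp_Bseq Bseq_def less_imp_le)
  then obtain M where M: "\<And>n x. norm (U (tt n) x) \<le> M * norm x"
    using uniform_boundedness[of "\<lambda>n. U (tt n)"] tt bounded_linear_U by force
  obtain n :: nat where "M \<le> n"
    using real_arch_simple by blast
  then have "M * norm (xx n) \<le> n * norm (xx n)"
    by (simp add: mult_right_mono)
  with M[of n "xx n"] xx[of n] show False
    by simp
qed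

lemma bounded_on_Icc:
  obtains C where "C \<ge> 1" "\<And>t x. t \<in> {0..T} \<Longrightarrow> norm (U t x) \<le> C * norm x"
proof -
  obtain \<delta> M where \<delta>: "\<delta> > 0" and M: "\<And>t x. t \<in> {0..\<delta>} \<Longrightarrow> norm (U t x) \<le> M * norm x"
    using locally_bounded by blast
  define C where "C = max 1 M"
  have C: "C \<ge> 1" "\<And>t x. t \<in> {0..\<delta>} \<Longrightarrow> norm (U t x) \<le> C * norm x"
    unfolding C_def using M by (auto intro: order_trans[OF _ mult_right_mono[OF max.cobounded2]])
  have powers: "\<forall>t\<in>{0..real n * \<delta>}. \<forall>x. norm (U t x) \<le> C ^ Suc n * norm x" for n
  proof (induction n)
    case 0
    then show ?case using C(2)[of 0] \<delta> by (auto simp: U_0)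
  next
    case (Suc n)
    show ?case
    proof (intro ballI allI)
      fix t x assume t: "t \<in> {0..real (Suc n) * \<delta>}"
      show "norm (U t x) \<le> C ^ Suc (Suc n) * norm x"
      proof (cases "t \<le> \<delta>")
        case True
        then have "norm (U t x) \<le> C * norm x" using C t by auto
        also have "\<dots> \<le> C ^ Suc (Suc n) * norm x"
          using C power_increasing[of 1 "Suc (Suc n)" C] by (intro mult_right_mono) auto
        finally show ?thesis .
      next
        case False
        then have "U t x = U \<delta> (U (t - \<delta>) x)" using U_plus[of \<delta> "t - \<delta>" x] \<delta> by simp
        then have "norm (U t x) \<le> C * norm (U (t - \<delta>) x)" using C \<delta> by auto
        also have "\<dots> \<le> C * (C ^ Suc n * norm x)"
          using Suc.IH False t C by (intro mult_left_mono) (auto simp: algebra_simps)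
        finally show ?thesis by simp
      qed
    qed
  qed
  obtain n :: nat where "T / \<delta> \<le> real n"
    using real_arch_simple by blast
  then have "{0..T} \<subseteq> {0..real n * \<delta>}"
    using \<delta> by (auto simp: field_simps)
  then show ?thesis
    using that[of "C ^ Suc n"] powers[of n] C(1) by (meson one_le_power subsetD)
qed

lemma continuous_on_orbit: "continuous_on {0..} (\<lambda>t. U t x)"
  unfolding continuous_on_eq_continuous_within
proof
  fix t0 :: real assume t0: "t0 \<in> {0..}"
  obtain C where C: "\<And>t y. t \<in> {0..t0 + 1} \<Longrightarrow> norm (U t y) \<le> C * norm y"
    using bounded_on_Icc[where T = "t0 + 1"] by blast
  have le: "norm (U t x - U t0 x) \<le> C * norm (U \<bar>t - t0\<bar> x - x)" if "t \<in> {0..t0 + 1}" for t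
  proof (cases "t0 \<le> t")
    case True
    then have "U t x - U t0 x = U t0 (U \<bar>t - t0\<bar> x - x)"
      using U_plus[of t0 "t - t0" x] t0 by (simp add: U_diff)
    then show ?thesis using C t0 by auto
  next
    case False
    then have "U t x - U t0 x = - U t (U \<bar>t - t0\<bar> x - x)"
      using U_plus[of t "t0 - t" x] that by (simp add: U_diff)
    then show ?thesis using C that by (simp only: norm_minus_cancel)
  qed
  have "\<forall>\<^sub>F t in at t0 within {0..}. t \<in> {0..t0 + 1}"
    by (auto simp: eventually_at dist_real_def intro!: exI[of _ 1])
  then have "\<forall>\<^sub>F t in at t0 within {0..}. norm (U t x - U t0 x) \<le> C * norm (U \<bar>t - t0\<bar> x - x)"
    by (rule eventually_mono) (rule le)
  moreover have "((\<lambda>t. U \<bar>t - t0\<bar> x) \<longlongrightarrow> U 0 x) (at t0 within {0..})"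
    by (intro continuous_within_tendsto_compose'[OF continuous_orbit_at_0])
       (auto intro!: tendsto_eq_intros)
  then have "((\<lambda>t. C * norm (U \<bar>t - t0\<bar> x - x)) \<longlongrightarrow> C * norm (x - x)) (at t0 within {0..})"
    unfolding U_0 by (intro tendsto_intros)
  then have "((\<lambda>t. C * norm (U \<bar>t - t0\<bar> x - x)) \<longlongrightarrow> 0) (at t0 within {0..})"
    by simp
  ultimately have "((\<lambda>t. U t x - U t0 x) \<longlongrightarrow> 0) (at t0 within {0..})"
    by (rule Lim_null_comparison)
  then show "continuous (at t0 within {0..}) (\<lambda>t. U t x)"
    by (simp add: continuous_within LIM_zero_iff)
qed

lemma integrable_orbit: "0 \<le> a \<Longrightarrow> (\<lambda>s. U s y) integrable_on {a..b}"
  by (intro integrable_continuous_real continuous_on_subset[OF continuous_on_orbit]) auto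

lemma U_orbit_integral:
  assumes "h \<ge> 0" "t \<ge> 0"
  shows "U h (integral {0..t} (\<lambda>s. U s y)) = integral {h..t + h} (\<lambda>s. U s y)"
proof -
  have "U h (integral {0..t} (\<lambda>s. U s y)) = integral {0..t} (\<lambda>s. U h (U s y))"
    using integral_linear[OF integrable_orbit[of 0 y t] bounded_linear_U[OF assms(1)]]
    by (simp add: o_def)
  also have "\<dots> = integral {0..t} (\<lambda>s. U (s + h) y)"
    by (rule integral_cong) (use assms in \<open>simp add: U_plus[symmetric] add.commute\<close>)
  also have "\<dots> = integral {h..t + h} (\<lambda>s. U s y)"
    using integral_shift_real_ivl[of h h "t + h" "\<lambda>s. U s y"] by simp
  finally show ?thesis .
qed

lemma orbit_integral_difference_quotient:
  assumes t: "t \<ge> 0"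
  shows "((\<lambda>h. (1 / h) *\<^sub>R (U h (integral {0..t} (\<lambda>s. U s y)) - integral {0..t} (\<lambda>s. U s y)))
    \<longlongrightarrow> U t y - y) (at_right 0)"
proof -
  have lim: "((\<lambda>h. (1 / h) *\<^sub>R integral {t..t + h} (\<lambda>s. U s y) - (1 / h) *\<^sub>R integral {0..0 + h} (\<lambda>s. U s y))
      \<longlongrightarrow> U t y - U 0 y) (at_right 0)"
    using t by (intro tendsto_diff integral_average_tendsto[where b = "t + 1"]
        integral_average_tendsto[where b = 1] continuous_on_subset[OF continuous_on_orbit]) auto
  have eq: "U h (integral {0..t} (\<lambda>s. U s y)) - integral {0..t} (\<lambda>s. U s y)
      = integral {t..t + h} (\<lambda>s. U s y) - integral {0..h} (\<lambda>s. U s y)" if "h > 0" for h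
  proof -
    have "integral {0..h} (\<lambda>s. U s y) + integral {h..t + h} (\<lambda>s. U s y) = integral {0..t + h} (\<lambda>s. U s y)"
      "integral {0..t} (\<lambda>s. U s y) + integral {t..t + h} (\<lambda>s. U s y) = integral {0..t + h} (\<lambda>s. U s y)"
      using that t by (auto intro!: Henstock_Kurzweil_Integration.integral_combine integrable_orbit)
    then show ?thesis
      using U_orbit_integral[of h t y] that t by (simp add: algebra_simps)
  qed
  have "\<forall>\<^sub>F h in at_right 0.
      (1 / h) *\<^sub>R integral {t..t + h} (\<lambda>s. U s y) - (1 / h) *\<^sub>R integral {0..0 + h} (\<lambda>s. U s y)
      = (1 / h) *\<^sub>R (U h (integral {0..t} (\<lambda>s. U s y)) - integral {0..t} (\<lambda>s. U s y))"
    using eq by (auto simp: eventually_at_right_field scaleR_diff_right[symmetric] intro!: exI[of _ 1])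
  from Lim_transform_eventually[OF lim this] show ?thesis
    by (simp add: U_0)
qed

lemma orbit_integral_in_gen_dom: "t \<ge> 0 \<Longrightarrow> integral {0..t} (\<lambda>s. U s y) \<in> gen_dom U"
  unfolding gen_dom_def using orbit_integral_difference_quotient by blast

lemma gen_orbit_integral: "t \<ge> 0 \<Longrightarrow> gen U (integral {0..t} (\<lambda>s. U s y)) = U t y - y"
  unfolding gen_def using orbit_integral_difference_quotient by (intro tendsto_Lim) auto

lemma orbit_average_tendsto: "((\<lambda>h. (1 / h) *\<^sub>R integral {0..h} (\<lambda>s. U s y)) \<longlongrightarrow> y) (at_right 0)"
  using integral_average_tendsto[of 0 1 "\<lambda>s. U s y"] continuous_on_subset[OF continuous_on_orbit]
  by (simp add: U_0)

end

section \<open>The adjoint of the generator\<close>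

locale hilbert_c0_semigroup = complex_hilbert_space sc ip + c0_semigroup U
  for sc :: "complex \<Rightarrow> 'a::banach \<Rightarrow> 'a" and ip and U +
  assumes U_sc: "t \<ge> 0 \<Longrightarrow> U t (sc c x) = sc c (U t x)"
begin

lemma orthogonal_gen_dom_eq_0:
  assumes "\<And>x. x \<in> gen_dom U \<Longrightarrow> ip x d = 0"
  shows "d = 0"
proof -
  have lim: "((\<lambda>h. ip ((1 / h) *\<^sub>R integral {0..h} (\<lambda>s. U s d)) d) \<longlongrightarrow> ip d d) (at_right 0)"
    by (intro bounded_bilinear.tendsto[OF bounded_bilinear_ip] orbit_average_tendsto tendsto_const)
  have "\<forall>\<^sub>F h in at_right 0. ip ((1 / h) *\<^sub>R integral {0..h} (\<lambda>s. U s d)) d = 0"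
    using assms orbit_integral_in_gen_dom
    by (auto simp: eventually_at_right_field ip_scaleR_left intro!: exI[of _ 1])
  then have "ip d d = 0"
    by (rule tendsto_unique[OF trivial_limit_at_right_real lim tendsto_eventually])
  then show ?thesis
    by (simp add: ip_self_eq_0_iff)
qed

lemma ip_gen_adj:
  assumes "z \<in> adj_dom ip (gen_dom U) (gen U)" and "x \<in> gen_dom U"
  shows "ip (gen U x) z = ip x (adj ip (gen_dom U) (gen U) z)"
proof -
  obtain w where w: "\<forall>x\<in>gen_dom U. ip (gen U x) z = ip x w"
    using assms(1) unfolding adj_dom_def by blast
  have "adj ip (gen_dom U) (gen U) z = w"
    unfolding adj_def
  proof (rule the_equality)
    fix w' assume "\<forall>x\<in>gen_dom U. ip (gen U x) z = ip x w'"
    then have "w' - w = 0"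
      using w by (intro orthogonal_gen_dom_eq_0) (simp add: ip_diff_right)
    then show "w' = w" by simp
  qed (rule w)
  then show ?thesis
    using w assms(2) by simp
qed

text \<open>Weak form of \<open>d/dt (U t y, z) = (U t y, L\<^sup>\<dagger> z)\<close>: apply the adjoint relation to the
  orbit integral, whose generator is \<open>U t y - y\<close>.\<close>
lemma ip_orbit_adj:
  assumes "z \<in> adj_dom ip (gen_dom U) (gen U)" and "t \<ge> 0"
  shows "ip (U t y) z = ip y z + integral {0..t} (\<lambda>s. ip (U s y) (adj ip (gen_dom U) (gen U) z))"
proof -
  have "ip (U t y - y) z = ip (integral {0..t} (\<lambda>s. U s y)) (adj ip (gen_dom U) (gen U) z)"
    using ip_gen_adj[OF assms(1) orbit_integral_in_gen_dom] gen_orbit_integral assms(2) by simp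
  also have "\<dots> = integral {0..t} (\<lambda>s. ip (U s y) (adj ip (gen_dom U) (gen U) z))"
    using integral_linear[OF integrable_orbit[of 0 y t]
        bounded_bilinear.bounded_linear_left[OF bounded_bilinear_ip]]
    by (simp add: o_def)
  finally show ?thesis
    by (simp add: ip_diff_left algebra_simps)
qed

end

lemma (in complex_hilbert_space) hilbert_c0_semigroupI:
  assumes "strongly_cont_semigroup sc U"
  shows "hilbert_c0_semigroup sc ip U"
proof -
  note U = assms[unfolded strongly_cont_semigroup_def bounded_clin_def]
  interpret c0_semigroup U
  proof (rule c0_semigroup.intro)
    show "bounded_linear (U t)" if "t \<ge> 0" for t
      using U that by blast
    show "U 0 x = x" for x
      using U by simp
    show "U (s + t) x = U s (U t x)" if "s \<ge> 0" "t \<ge> 0" for s t x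
      using U that by simp
    show "((\<lambda>t. U t x) \<longlongrightarrow> x) (at_right 0)" for x
      using U by blast
  qed
  show ?thesis
    by (intro hilbert_c0_semigroup.intro complex_hilbert_space_axioms c0_semigroup_axioms
        hilbert_c0_semigroup_axioms.intro) (use U in blast)
qed

section \<open>The perturbed semigroup\<close>

locale volterra_perturbation = hilbert_c0_semigroup sc ip U
  for sc :: "complex \<Rightarrow> 'a::banach \<Rightarrow> 'a" and ip and U +
  fixes z Ldz :: 'a and P Q :: "'a \<Rightarrow> 'a" and f :: "'a \<Rightarrow> real \<Rightarrow> complex"
  assumes z_adj_dom: "z \<in> adj_dom ip (gen_dom U) (gen U)"
    and z_nonzero: "z \<noteq> 0"
    and Ldz_def: "Ldz = adj ip (gen_dom U) (gen U) z"
    and P_def: "\<And>x. P x = sc (ip x z / ip z z) z"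
    and Q_def: "\<And>x. Q x = x - P x"
    and f_cont: "\<And>x. continuous_on {0..} (f x)"
    and f_eq: "\<And>x t. 0 \<le> t \<Longrightarrow>
       f x t = ip (U t (Q x)) (Q Ldz) / ip z z
             - integral {0..t} (\<lambda>s. f x (t - s) * (ip (U s z) (Q Ldz) / ip z z))"
begin

definition kernel :: "real \<Rightarrow> complex" where
  "kernel s = ip (U s z) (Q Ldz) / ip z z"

definition forcing :: "'a \<Rightarrow> real \<Rightarrow> complex" where
  "forcing x t = ip (U t (Q x)) (Q Ldz) / ip z z"

definition memory :: "'a \<Rightarrow> real \<Rightarrow> 'a" where
  "memory x t = integral {0..t} (\<lambda>s. sc (f x (t - s)) (U s z))"

definition G :: "real \<Rightarrow> 'a \<Rightarrow> 'a" where
  "G t x = P x + U t (Q x) - memory x t"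

lemma ip_z_z_nonzero: "ip z z \<noteq> 0"
  using z_nonzero by (simp add: ip_self_eq_0_iff)

lemma f_volterra: "t \<ge> 0 \<Longrightarrow> f x t = forcing x t - conv (f x) kernel t"
  using f_eq by (simp add: forcing_def kernel_def conv_def)

lemma continuous_on_f: "continuous_on {0..T} (f x)"
  using f_cont by (rule continuous_on_subset) auto

lemma continuous_on_ip_orbit: "continuous_on {0..T} (\<lambda>s. ip (U s y) v)"
  by (intro bounded_bilinear.continuous_on[OF bounded_bilinear_ip] continuous_intros
      continuous_on_subset[OF continuous_on_orbit]) auto

lemma continuous_on_kernel: "continuous_on {0..T} kernel"
  unfolding kernel_def by (intro continuous_intros continuous_on_ip_orbit) (simp add: ip_z_z_nonzero)

lemma P_add: "P (x + y) = P x + P y"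
  by (simp add: P_def ip_add_left add_divide_distrib sc_add_left)

lemma P_sc: "P (sc a x) = sc a (P x)"
  by (simp add: P_def ip_sc_left sc_mult[symmetric])

lemma Q_add: "Q (x + y) = Q x + Q y"
  by (simp add: Q_def P_add)

lemma Q_sc: "Q (sc a x) = sc a (Q x)"
  by (simp add: Q_def P_sc sc_diff_right)

lemma P_idem: "P (P x) = P x"
  using ip_z_z_nonzero by (simp add: P_def ip_sc_left)

lemma P_eq_0_if_orthogonal: "ip v z = 0 \<Longrightarrow> P v = 0"
  by (simp add: P_def)

lemma ip_Q_z: "ip (Q x) z = 0"
  using ip_z_z_nonzero by (simp add: Q_def P_def ip_diff_left ip_sc_left)

lemma norm_P_le: "norm (P x) \<le> norm x"
proof -
  have "norm (P x) = norm (ip x z) / norm z"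
    using z_nonzero by (simp add: P_def norm_sc norm_divide norm_mult ip_self power2_eq_square)
  also have "\<dots> \<le> norm x"
    using z_nonzero norm_ip_le[of x z] by (simp add: divide_le_eq)
  finally show ?thesis .
qed

lemma norm_Q_le: "norm (Q x) \<le> 2 * norm x"
  using norm_P_le[of x] norm_triangle_ineq4[of x "P x"] by (simp add: Q_def)

lemma f_unique:
  assumes "continuous_on {0..} \<phi>" and "\<And>t. t \<ge> 0 \<Longrightarrow> \<phi> t = forcing x t - conv \<phi> kernel t"
    and "t \<ge> 0"
  shows "f x t = \<phi> t"
proof (rule volterra_unique[where T = t and k = kernel and a = "forcing x"])
  show "continuous_on {0..t} \<phi>"
    using assms(1) by (rule continuous_on_subset) auto
qed (use assms f_volterra continuous_on_f continuous_on_kernel in auto)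

lemma forcing_add: "t \<ge> 0 \<Longrightarrow> forcing (x + y) t = forcing x t + forcing y t"
  by (simp add: forcing_def Q_add U_add ip_add_left add_divide_distrib)

lemma forcing_sc: "t \<ge> 0 \<Longrightarrow> forcing (sc a x) t = a * forcing x t"
  by (simp add: forcing_def Q_sc U_sc ip_sc_left)

lemma f_add:
  assumes "t \<ge> 0"
  shows "f (x + y) t = f x t + f y t"
proof (rule f_unique[OF _ _ assms])
  show "continuous_on {0..} (\<lambda>t. f x t + f y t)"
    by (intro continuous_intros f_cont)
  show "f x t + f y t = forcing (x + y) t - conv (\<lambda>t. f x t + f y t) kernel t" if "t \<ge> 0" for t
    using that
    by (simp add: conv_add_left[where T = t, OF continuous_on_f continuous_on_f continuous_on_kernel]
        f_volterra forcing_add)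
qed

lemma f_sc:
  assumes "t \<ge> 0"
  shows "f (sc a x) t = a * f x t"
proof (rule f_unique[OF _ _ assms])
  show "continuous_on {0..} (\<lambda>t. a * f x t)"
    by (intro continuous_intros f_cont)
  show "a * f x t = forcing (sc a x) t - conv (\<lambda>t. a * f x t) kernel t" if "t \<ge> 0" for t
    using that by (simp add: conv_cmult_left f_volterra forcing_sc right_diff_distrib)
qed

lemma f_bound:
  obtains M where "M \<ge> 0" "\<And>x t. t \<in> {0..T} \<Longrightarrow> norm (f x t) \<le> M * norm x"
proof -
  obtain C where C: "C \<ge> 1" "\<And>t x. t \<in> {0..T} \<Longrightarrow> norm (U t x) \<le> C * norm x"
    using bounded_on_Icc[where T = T] by blast
  obtain B where B: "B \<ge> 0" "\<And>s. s \<in> {0..T} \<Longrightarrow> norm (kernel s) \<le> B"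
    using continuous_on_compact_bound[OF compact_Icc continuous_on_kernel] by metis
  define A where "A = 2 * C * norm (Q Ldz) / norm (ip z z)"
  have "norm (forcing x t) \<le> A * norm x" if t: "t \<in> {0..T}" for x t
  proof -
    have "norm (forcing x t) \<le> norm (U t (Q x)) * norm (Q Ldz) / norm (ip z z)"
      unfolding forcing_def norm_divide by (intro divide_right_mono norm_ip_le) simp
    also have "\<dots> \<le> C * (2 * norm x) * norm (Q Ldz) / norm (ip z z)"
      using C(1) by (intro divide_right_mono mult_right_mono order_trans[OF C(2)[OF t]]
          mult_left_mono norm_Q_le) auto
    finally show ?thesis by (simp add: A_def algebra_simps)
  qed
  then have "norm (f x t) \<le> A * norm x * exp (B * t)" if "t \<in> {0..T}" for x t
    by (intro volterra_bound[OF continuous_on_f continuous_on_kernel _ _ B(2) that]) (auto simp: f_volterra)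
  moreover have A: "A \<ge> 0"
    using C(1) by (simp add: A_def)
  moreover have "A * norm x * exp (B * t) \<le> A * exp (B * T) * norm x" if "t \<in> {0..T}" for x t
  proof -
    have "exp (B * t) \<le> exp (B * T)"
      using that B(1) by (simp add: mult_left_mono)
    then have "A * norm x * exp (B * t) \<le> A * norm x * exp (B * T)"
      using A by (intro mult_left_mono) auto
    then show ?thesis by (simp add: mult_ac)
  qed
  ultimately show ?thesis
    using that[of "A * exp (B * T)"] by (meson order_trans zero_le_mult_iff exp_ge_zero)
qed

lemma continuous_on_memory_integrand:
  assumes "\<tau> \<ge> 0"
  shows "continuous_on {0..t} (\<lambda>s. sc (f x (t - s)) (U (\<tau> + s) z))"
proof -
  have "continuous_on {0..t} (\<lambda>s. U (\<tau> + s) z)"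
    using assms by (intro continuous_on_compose2[OF continuous_on_orbit] continuous_intros) auto
  then show ?thesis
    by (intro bounded_bilinear.continuous_on[OF bounded_bilinear_sc]
        continuous_on_reflect[OF continuous_on_f order_refl])
qed

lemma integrable_memory_integrand: "(\<lambda>s. sc (f x (t - s)) (U s z)) integrable_on {0..t}"
  using continuous_on_memory_integrand[of 0] by (simp add: integrable_continuous_real)

lemma memory_add: "t \<ge> 0 \<Longrightarrow> memory (x + y) t = memory x t + memory y t"
  unfolding memory_def integral_add[OF integrable_memory_integrand integrable_memory_integrand, symmetric]
  by (rule integral_cong) (simp add: f_add sc_add_left)

lemma memory_sc: "t \<ge> 0 \<Longrightarrow> memory (sc a x) t = sc a (memory x t)"
proof -
  assume t: "t \<ge> 0"
  have "memory (sc a x) t = integral {0..t} (\<lambda>s. sc a (sc (f x (t - s)) (U s z)))"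
    unfolding memory_def by (rule integral_cong) (use t in \<open>simp add: f_sc sc_mult\<close>)
  also have "\<dots> = sc a (memory x t)"
    unfolding memory_def
    using integral_linear[OF integrable_memory_integrand
        bounded_bilinear.bounded_linear_right[OF bounded_bilinear_sc]]
    by (simp add: o_def)
  finally show ?thesis .
qed

lemma norm_memory_le:
  obtains K where "K \<ge> 0" "\<And>x t. t \<in> {0..T} \<Longrightarrow> norm (memory x t) \<le> t * K * norm x"
proof -
  obtain M where M: "M \<ge> 0" "\<And>x t. t \<in> {0..T} \<Longrightarrow> norm (f x t) \<le> M * norm x"
    using f_bound[where T = T] by blast
  obtain C where C: "C \<ge> 1" "\<And>t x. t \<in> {0..T} \<Longrightarrow> norm (U t x) \<le> C * norm x"
    using bounded_on_Icc[where T = T] by blast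
  have "norm (memory x t) \<le> t * (M * C * norm z) * norm x" if t: "t \<in> {0..T}" for x t
  proof -
    have "norm (memory x t) \<le> integral {0..t} (\<lambda>s. M * norm x * (C * norm z))"
      unfolding memory_def
    proof (rule integral_norm_bound_integral[OF integrable_memory_integrand])
      fix s assume "s \<in> {0..t}"
      then show "norm (sc (f x (t - s)) (U s z)) \<le> M * norm x * (C * norm z)"
        unfolding norm_sc using t M(1) C(1) by (intro mult_mono M(2) C(2)) auto
    qed (rule integrable_const_ivl)
    also have "\<dots> = t * (M * C * norm z) * norm x"
      using t by (simp add: mult_ac)
    finally show ?thesis .
  qed
  with M(1) C(1) show ?thesis
    by (intro that[of "M * C * norm z"]) auto
qed

lemma ip_memory: "ip (memory x t) v = conv (f x) (\<lambda>s. ip (U s z) v) t"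
  unfolding memory_def conv_def
  using integral_linear[OF integrable_memory_integrand
      bounded_bilinear.bounded_linear_left[OF bounded_bilinear_ip]]
  by (simp add: o_def ip_sc_left)

lemma U_memory:
  assumes "\<tau> \<ge> 0" "s \<ge> 0"
  shows "U \<tau> (memory x s) = integral {0..s} (\<lambda>\<sigma>. sc (f x (s - \<sigma>)) (U (\<tau> + \<sigma>) z))"
proof -
  have "U \<tau> (memory x s) = integral {0..s} (\<lambda>\<sigma>. U \<tau> (sc (f x (s - \<sigma>)) (U \<sigma> z)))"
    unfolding memory_def
    using integral_linear[OF integrable_memory_integrand bounded_linear_U[OF assms(1)]]
    by (simp add: o_def)
  also have "\<dots> = integral {0..s} (\<lambda>\<sigma>. sc (f x (s - \<sigma>)) (U (\<tau> + \<sigma>) z))"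
    by (rule integral_cong) (use assms in \<open>simp add: U_sc U_plus\<close>)
  finally show ?thesis .
qed

lemma ip_U_memory:
  assumes "\<tau> \<ge> 0" "s \<ge> 0"
  shows "ip (U \<tau> (memory x s)) v = integral {0..s} (\<lambda>\<sigma>. f x (s - \<sigma>) * ip (U (\<tau> + \<sigma>) z) v)"
  unfolding U_memory[OF assms]
  using integral_linear[OF integrable_continuous_real[OF continuous_on_memory_integrand[OF assms(1)]]
      bounded_bilinear.bounded_linear_left[OF bounded_bilinear_ip]]
  by (simp add: o_def ip_sc_left)

lemma G_add: "t \<ge> 0 \<Longrightarrow> G t (x + y) = G t x + G t y"
  by (simp add: G_def P_add Q_add U_add memory_add algebra_simps)

lemma G_sc: "t \<ge> 0 \<Longrightarrow> G t (sc a x) = sc a (G t x)"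
  by (simp add: G_def P_sc Q_sc U_sc memory_sc sc_add_right sc_diff_right)

lemma bounded_clin_G:
  assumes t: "t \<ge> 0"
  shows "bounded_clin sc (G t)"
proof -
  obtain K where K: "K \<ge> 0" "\<And>x s. s \<in> {0..t} \<Longrightarrow> norm (memory x s) \<le> s * K * norm x"
    using norm_memory_le[where T = t] by blast
  obtain C where C: "C \<ge> 1" "\<And>s x. s \<in> {0..t} \<Longrightarrow> norm (U s x) \<le> C * norm x"
    using bounded_on_Icc[where T = t] by blast
  have "bounded_linear (G t)"
  proof (rule bounded_linear_intro[where K = "1 + 2 * C + t * K"])
    show "G t (x + y) = G t x + G t y" for x y
      using t by (rule G_add)
    show "G t (r *\<^sub>R x) = r *\<^sub>R G t x" for r x
      using G_sc[OF t, of "complex_of_real r" x] by (simp add: sc_of_real)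
    show "norm (G t x) \<le> norm x * (1 + 2 * C + t * K)" for x
    proof -
      have "norm (G t x) \<le> norm (P x) + norm (U t (Q x)) + norm (memory x t)"
        unfolding G_def by (rule order_trans[OF norm_triangle_ineq4 add_right_mono[OF norm_triangle_ineq]])
      also have "\<dots> \<le> norm x + C * (2 * norm x) + t * K * norm x"
        using t C(1) by (intro add_mono norm_P_le order_trans[OF C(2)] mult_left_mono norm_Q_le K(2)) auto
      finally show ?thesis
        by (simp add: algebra_simps)
    qed
  qed
  then show ?thesis
    using G_sc t by (simp add: bounded_clin_def)
qed

lemma G_0: "G 0 x = x"
  by (simp add: G_def memory_def Q_def U_0)

lemma tendsto_G_0: "((\<lambda>t. G t x) \<longlongrightarrow> x) (at_right 0)"
proof -
  obtain K where "K \<ge> 0" and K: "\<And>x s. s \<in> {0..1} \<Longrightarrow> norm (memory x s) \<le> s * K * norm x"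
    using norm_memory_le[where T = 1] by blast
  have "((\<lambda>t. memory x t) \<longlongrightarrow> 0) (at_right 0)"
  proof (rule Lim_null_comparison)
    show "\<forall>\<^sub>F t in at_right 0. norm (memory x t) \<le> t * K * norm x"
      by (auto simp: eventually_at_right_field intro!: exI[of _ 1] K)
    have "((\<lambda>t. t * K * norm x) \<longlongrightarrow> 0 * K * norm x) (at_right 0)"
      by (intro tendsto_intros)
    then show "((\<lambda>t. t * K * norm x) \<longlongrightarrow> 0) (at_right 0)"
      by simp
  qed
  then have "((\<lambda>t. P x + U t (Q x) - memory x t) \<longlongrightarrow> P x + Q x - 0) (at_right 0)"
    by (intro tendsto_intros tendsto_U_0)
  then show ?thesis
    by (simp add: G_def Q_def)
qed

lemma continuous_on_ip_memory: "continuous_on {0..T} (\<lambda>t. ip (memory x t) v)"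
  unfolding ip_memory by (intro continuous_on_conv continuous_on_f continuous_on_ip_orbit)

lemma integrable_ip_memory: "(\<lambda>t. ip (memory x t) v) integrable_on {0..T}"
  by (intro integrable_continuous_real continuous_on_ip_memory)

text \<open>Weak form of the memory term, obtained from that of \<open>U s z\<close> by associativity of the
  convolution.\<close>
lemma ip_memory_z:
  assumes "t \<ge> 0"
  shows "ip (memory x t) z = ip z z * integral {0..t} (f x) + integral {0..t} (\<lambda>u. ip (memory x u) Ldz)"
proof -
  have "ip (U s z) z = ip z z + integral {0..s} (\<lambda>\<sigma>. ip (U \<sigma> z) Ldz)" if "s \<ge> 0" for s
    using ip_orbit_adj[OF z_adj_dom that] by (simp add: Ldz_def)
  then have "ip (memory x t) z = conv (f x) (\<lambda>s. ip z z + integral {0..s} (\<lambda>\<sigma>. ip (U \<sigma> z) Ldz)) t"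
    unfolding ip_memory conv_def by (intro integral_cong) simp
  also have "\<dots> = ip z z * integral {0..t} (f x) + conv (f x) (\<lambda>s. integral {0..s} (\<lambda>\<sigma>. ip (U \<sigma> z) Ldz)) t"
    using assms
    by (intro conv_const_add_right[where T = t] continuous_on_f indefinite_integral_continuous_1
        integrable_continuous_real continuous_on_ip_orbit) auto
  also have "conv (f x) (\<lambda>s. integral {0..s} (\<lambda>\<sigma>. ip (U \<sigma> z) Ldz)) t
      = integral {0..t} (\<lambda>u. ip (memory x u) Ldz)"
    using assms
    by (simp add: conv_integral_assoc[where T = t, OF continuous_on_f continuous_on_ip_orbit] ip_memory)
  finally show ?thesis .
qed

lemma ip_z_z_mult_f:
  assumes "t \<ge> 0"
  shows "ip z z * f x t = ip (U t (Q x) - memory x t) (Q Ldz)"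
proof -
  have "ip z z * conv (f x) kernel t = conv (f x) (\<lambda>s. ip (U s z) (Q Ldz)) t"
    using ip_z_z_nonzero by (simp add: kernel_def conv_cmult_right[symmetric])
  then show ?thesis
    using ip_z_z_nonzero f_volterra[OF assms]
    by (simp add: forcing_def ip_diff_left ip_memory right_diff_distrib)
qed

text \<open>Subtracting the weak forms of \<open>U t (Q x)\<close> and of the memory term, the Volterra equation
  turns \<open>L\<^sup>\<dagger> z\<close> into \<open>P (L\<^sup>\<dagger> z)\<close>, a multiple of \<open>z\<close>.\<close>
lemma ip_U_Q_minus_memory_z:
  assumes t: "t \<ge> 0"
  shows "ip (U t (Q x) - memory x t) z
    = cnj (ip Ldz z / ip z z) * integral {0..t} (\<lambda>s. ip (U s (Q x) - memory x s) z)"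
proof -
  have integrable: "(\<lambda>s. ip (U s y) v) integrable_on {0..t}" "f x integrable_on {0..t}" for y v
    by (intro integrable_continuous_real continuous_on_ip_orbit continuous_on_f)+
  have "ip (U t (Q x) - memory x t) z = integral {0..t} (\<lambda>s. ip (U s (Q x)) Ldz) - ip (memory x t) z"
    using ip_orbit_adj[OF z_adj_dom t, of "Q x"] by (simp add: ip_diff_left ip_Q_z Ldz_def)
  also have "\<dots> = integral {0..t} (\<lambda>s. ip (U s (Q x)) Ldz - ip (memory x s) Ldz - ip z z * f x s)"
    using integrable integrable_ip_memory
    by (simp add: ip_memory_z[OF t] integral_diff integrable_diff integrable_on_mult_right)
  also have "\<dots> = integral {0..t} (\<lambda>s. ip (U s (Q x) - memory x s) (Ldz - Q Ldz))"
    by (intro integral_cong) (simp add: ip_z_z_mult_f ip_diff_left ip_diff_right)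
  also have "Ldz - Q Ldz = sc (ip Ldz z / ip z z) z"
    by (simp add: Q_def P_def)
  finally show ?thesis
    by (simp add: ip_sc_right)
qed

lemma U_Q_minus_memory_orthogonal:
  assumes "t \<ge> 0"
  shows "ip (U t (Q x) - memory x t) z = 0"
proof -
  define g where "g u = ip (U u (Q x) - memory x u) z" for u
  have "g t = 0"
  proof (rule volterra_unique[where T = t and k = "\<lambda>_. - cnj (ip Ldz z / ip z z)" and a = "\<lambda>_. 0"])
    show "continuous_on {0..t} g"
      unfolding g_def ip_diff_left by (intro continuous_intros continuous_on_ip_orbit continuous_on_ip_memory)
    show "g u = 0 - conv g (\<lambda>_. - cnj (ip Ldz z / ip z z)) u" if "u \<in> {0..t}" for u
      using ip_U_Q_minus_memory_z[of u x] that by (simp add: g_def[abs_def] conv_const_right)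
  qed (use assms in \<open>auto simp: conv_def\<close>)
  then show ?thesis
    by (simp add: g_def)
qed

lemma P_G: "s \<ge> 0 \<Longrightarrow> P (G s x) = P x"
  using U_Q_minus_memory_orthogonal[of s x] P_add[of "P x"] P_eq_0_if_orthogonal
  by (simp add: G_def P_idem add_diff_eq[symmetric])

lemma Q_G: "s \<ge> 0 \<Longrightarrow> Q (G s x) = U s (Q x) - memory x s"
  by (simp add: Q_def[of "G s x"] P_G) (simp add: G_def)

text \<open>Splitting the convolution for \<open>f x\<close> at \<open>\<tau>\<close>, the part beyond \<open>\<tau>\<close> is absorbed by the
  forcing term of \<open>G s x\<close>; then uniqueness for the Volterra equation applies.\<close>
lemma f_G_shift:
  assumes s: "s \<ge> 0" and \<tau>: "\<tau> \<ge> 0"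
  shows "f (G s x) \<tau> = f x (\<tau> + s)"
proof (rule f_unique[OF _ _ \<tau>])
  show "continuous_on {0..} (\<lambda>\<tau>. f x (\<tau> + s))"
    using s by (intro continuous_on_compose2[OF f_cont] continuous_intros) auto
  fix \<tau> :: real assume \<tau>: "\<tau> \<ge> 0"
  define J where "J = integral {0..s} (\<lambda>\<sigma>. f x (s - \<sigma>) * kernel (\<tau> + \<sigma>))"
  have "forcing (G s x) \<tau> = forcing x (\<tau> + s) - J"
    using s \<tau> by (simp add: forcing_def Q_G U_diff U_plus ip_diff_left ip_U_memory J_def kernel_def
        diff_divide_distrib)
  moreover have "conv (f x) kernel (\<tau> + s) = conv (\<lambda>\<tau>. f x (\<tau> + s)) kernel \<tau> + J"
  proof -
    have "(\<lambda>\<sigma>. f x (\<tau> + s - \<sigma>) * kernel \<sigma>) integrable_on {0..\<tau> + s}"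
      using s \<tau> by (intro integrable_conv continuous_on_f continuous_on_kernel) auto
    then show ?thesis
      using s \<tau> by (simp add: conv_def J_def integral_combine_shift algebra_simps)
  qed
  ultimately show "f x (\<tau> + s) = forcing (G s x) \<tau> - conv (\<lambda>\<tau>. f x (\<tau> + s)) kernel \<tau>"
    using s \<tau> by (simp add: f_volterra)
qed

lemma G_plus:
  assumes s: "s \<ge> 0" and t: "t \<ge> 0"
  shows "G (t + s) x = G t (G s x)"
proof -
  define I where "I = integral {0..t} (\<lambda>\<sigma>. sc (f x (t + s - \<sigma>)) (U \<sigma> z))"
  have "memory (G s x) t = I"
    unfolding memory_def I_def by (rule integral_cong) (use s t in \<open>simp add: f_G_shift algebra_simps\<close>)
  moreover have "memory x (t + s) = I + U t (memory x s)"
    using s t continuous_on_memory_integrand[of 0 "t + s" x]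
    by (simp add: memory_def[of x "t + s"] I_def U_memory integral_combine_shift
        integrable_continuous_real)
  ultimately show ?thesis
    using s t by (simp add: G_def[of "t + s"] G_def[of t "G s x"] P_G Q_G U_plus U_diff)
qed

lemma strongly_cont_semigroup_G: "strongly_cont_semigroup sc G"
  unfolding strongly_cont_semigroup_def
  by (auto simp: bounded_clin_G G_0 G_plus tendsto_G_0 fun_eq_iff add.commute)

end

theorem theorem3:
  fixes sc :: "complex \<Rightarrow> 'a::banach \<Rightarrow> 'a"
    and ip :: "'a \<Rightarrow> 'a \<Rightarrow> complex"
    and U :: "real \<Rightarrow> 'a \<Rightarrow> 'a"
    and z :: 'a
    and P Q :: "'a \<Rightarrow> 'a"
    and Ldz :: 'a
    and f :: "'a \<Rightarrow> real \<Rightarrow> complex"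
  assumes hilb: "complex_hilbert sc ip"
    and semi: "strongly_cont_semigroup sc U"
    and zdom: "z \<in> adj_dom ip (gen_dom U) (gen U)"
    and znz: "z \<noteq> 0"
    and Ldz_def: "Ldz = adj ip (gen_dom U) (gen U) z"
    and P_def: "\<And>x. P x = sc (ip x z / ip z z) z"
    and Q_def: "\<And>x. Q x = x - P x"
    and f_cont: "\<And>x. continuous_on {0..} (f x)"
    and f_eq: "\<And>x t. 0 \<le> t \<Longrightarrow>
       f x t = ip (U t (Q x)) (Q Ldz) / ip z z
             - integral {0..t} (\<lambda>s. f x (t - s) * (ip (U s z) (Q Ldz) / ip z z))"
  shows "strongly_cont_semigroup sc
           (\<lambda>t x. P x + U t (Q x) - integral {0..t} (\<lambda>s. sc (f x (t - s)) (U s z)))"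
proof -
  interpret hilbert_c0_semigroup sc ip U
    using complex_hilbert_space.hilbert_c0_semigroupI[OF complex_hilbert_space.intro[OF hilb] semi] .
  interpret volterra_perturbation sc ip U z Ldz P Q f
    by unfold_locales (fact zdom znz Ldz_def P_def Q_def f_cont f_eq)+
  have "(\<lambda>t x. P x + U t (Q x) - integral {0..t} (\<lambda>s. sc (f x (t - s)) (U s z))) = G"
    by (simp add: fun_eq_iff G_def memory_def)
  with strongly_cont_semigroup_G show ?thesis
    by simp
qed

end
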